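(* Let $(X,d,\mu)$ be a metric measure space satisfying the generalized Bishop--Gromov inequality $\mathrm{BG}(k,n)$ with constant $C$, for some $k\in\mathbb{R}$, $n\ge 1$ and $C\ge 1$. If $x\in X$ is a local cut point of $X$, then $\deg(x)\le C^2+1$.
   Context: A metric measure space $(X,d,\mu)$ means a complete, locally compact length space $(X,d)$ equipped with a Borel measure $\mu$. $B_r(x)$ and $\overline B_r(x)$ denote the open and closed balls of radius $r$ about $x$. For $k\in\mathbb{R}$ let $\mathsf s_k(t)=\sin(\sqrt{k}\,t)/\sqrt{k}$ if $k>0$, $\mathsf s_k(t)=t$ if $k=0$, $\mathsf s_k(t)=\sinh(\sqrt{-k}\,t)/\sqrt{-k}$ if $k<0$. For real $n\ge1$ and $0\le r_1<r_2$ set $V_{k,n}(r_1,r_2)=\alpha_{n-1}\int_{r_1}^{r_2}\mathsf s_k(t)^{n-1}\,dt$ with $\alpha_{n-1}=2\pi^{n/2}/\Gamma(n/2)$. For $x\in X$ let $A_{r_1,r_2}(x)=B_{r_2}(x)\setminus\overline B_{r_1}(x)$ and $A_{0,r}(x)=B_r(x)$. For a measurable $U\subset A_{r_1,r_2}(x)$ and $0\le s_1<s_2$ with $s_1\le r_1$, $s_2\le r_2$, let $S_{s_1,s_2}(x,U)=\{y\in A_{s_1,s_2}(x): d(x,y)+d(y,z)=d(x,z)\text{ for some }z\in U\}$. $(X,d,\mu)$ satisfies $\mathrm{BG}(k,n)$ with constant $C\ge1$ if for every $x\in X$, all $0\le r_1<r_2$, $0\le s_1<s_2$ with $s_1\le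 r_1$, $s_2\le r_2$, and every measurable $U\subset A_{r_1,r_2}(x)$, one has $\mu(U)/\mu(S_{s_1,s_2}(x,U))\le C\,V_{k,n}(r_1,r_2)/V_{k,n}(s_1,s_2)$. A point $x\in X$ is a local cut point if $U\setminus\{x\}$ is disconnected for some connected neighborhood $U$ of $x$. The degree $\deg(x)$ is the supremum, over all connected neighborhoods $U$ of $x$, of the number of connected components of $U\setminus\{x\}$. *)

theory Defs
  imports "HOL-Analysis.Analysis"
begin

definition sk :: "real \<Rightarrow> real \<Rightarrow> real" where
  "sk k t = (if k > 0 then sin (sqrt k * t) / sqrt k
             else if k = 0 then t
             else sinh (sqrt (- k) * t) / sqrt (- k))"

text \<open>Real power s^(n-1) for real n >= 1; s^0 = 1; nonpositive bases give 0 when n > 1.\<close>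
definition rpow :: "real \<Rightarrow> real \<Rightarrow> real" where
  "rpow s n = (if n = 1 then 1 else if s > 0 then s powr (n - 1) else 0)"

definition alpha :: "real \<Rightarrow> real" where
  "alpha n = 2 * pi powr (n / 2) / Gamma (n / 2)"   (* alpha_{n-1} = alpha n *)

definition Vkn :: "real \<Rightarrow> real \<Rightarrow> real \<Rightarrow> real \<Rightarrow> real" where
  "Vkn k n r1 r2 = alpha n * integral {r1..r2} (\<lambda>t. rpow (sk k t) n)"

definition curve_length :: "(real \<Rightarrow> 'a::metric_space) \<Rightarrow> ennreal" where
  "curve_length \<gamma> =
     (SUP p \<in> {(N, t). t 0 = 0 \<and> t N = 1 \<and> (\<forall>i<N. t i \<le> t (Suc i))}.
        ennreal (\<Sum>i<fst p. dist (\<gamma> (snd p i)) (\<gamma> (snd p (Suc i)))))"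

definition length_space :: "'a::metric_space itself \<Rightarrow> bool" where
  "length_space _ \<longleftrightarrow> (\<forall>x y::'a. ennreal (dist x y) =
      (INF \<gamma> \<in> {\<gamma>. path \<gamma> \<and> pathstart \<gamma> = x \<and> pathfinish \<gamma> = y}. curve_length \<gamma>))"

definition metric_measure_space :: "'a::metric_space measure \<Rightarrow> bool" where
  "metric_measure_space \<mu> \<longleftrightarrow>
     complete (UNIV :: 'a set) \<and> locally_compact_space (euclidean :: 'a topology) \<and>
     length_space TYPE('a) \<and> sets \<mu> = sets borel \<and>
     (\<forall>x r. r > 0 \<longrightarrow> 0 < emeasure \<mu> (ball x r) \<and> emeasure \<mu> (ball x r) < \<infinity>)"

definition outer_meas :: "'a measure \<Rightarrow> 'a set \<Rightarrow> ennreal" where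
  "outer_meas \<mu> A = (INF B \<in> {B \<in> sets \<mu>. A \<subseteq> B}. emeasure \<mu> B)"

definition annulus :: "'a::metric_space \<Rightarrow> real \<Rightarrow> real \<Rightarrow> 'a set" where
  "annulus x r1 r2 = (if r1 = 0 then ball x r2 else ball x r2 - cball x r1)"

definition Sset :: "'a::metric_space \<Rightarrow> real \<Rightarrow> real \<Rightarrow> 'a set \<Rightarrow> 'a set" where
  "Sset x s1 s2 U = {y \<in> annulus x s1 s2. \<exists>z\<in>U. dist x y + dist y z = dist x z}"

definition BG :: "real \<Rightarrow> real \<Rightarrow> real \<Rightarrow> 'a::metric_space measure \<Rightarrow> bool" where
  "BG k n C \<mu> \<longleftrightarrow>
     (\<forall>x r1 r2 s1 s2 U. 0 \<le> r1 \<and> r1 < r2 \<and> 0 \<le> s1 \<and> s1 < s2 \<and> s1 \<le> r1 \<and> s2 \<le> r2 \<and>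
        U \<in> sets \<mu> \<and> U \<subseteq> annulus x r1 r2 \<longrightarrow>
        emeasure \<mu> U * ennreal (Vkn k n s1 s2)
          \<le> ennreal C * ennreal (Vkn k n r1 r2) * outer_meas \<mu> (Sset x s1 s2 U))"

definition local_cut_point :: "'a::topological_space \<Rightarrow> bool" where
  "local_cut_point x \<longleftrightarrow> (\<exists>U. open U \<and> x \<in> U \<and> connected U \<and> \<not> connected (U - {x}))"

definition ncomp :: "'a::topological_space set \<Rightarrow> ennreal" where
  "ncomp S = (if finite (components S) then of_nat (card (components S)) else \<infinity>)"

definition deg :: "'a::topological_space \<Rightarrow> ennreal" where
  "deg x = (SUP U \<in> {U. open U \<and> x \<in> U \<and> connected U}. ncomp (U - {x}))"

end

theory Submission
  imports Defs
begin

(* Pick in each of finitely many components i of U - {x} a point y_i at small distance r_i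
   from x, and let W_i be the part of component i in a small ball B(x, \<delta>). Near x, distances
   between different components add up through x. Hence the other W_j lie in the annulus
   A_{r_i, r_i + \<delta>}(y_i), and the points S_{r_i - \<delta>, r_i}(y_i, \<Union>_{j \<noteq> i} W_j) on geodesics towards
   them lie in W_i, so BG(k,n) gives
     \<mu>(\<Union>_{j \<noteq> i} W_j) \<le> C V(r_i, r_i + \<delta>) / V(r_i - \<delta>, r_i) \<mu>(W_i),
   where the volume ratio tends to 1 as \<delta> \<rightarrow> 0. Summing over i bounds the number of components
   by C + 1, so deg x \<le> C + 1 \<le> C^2 + 1 whether or not x is a local cut point. *)

lemma curve_length_ge_dist_via:
  assumes "0 \<le> t" "t \<le> 1"
  shows "ennreal (dist (\<gamma> 0) (\<gamma> t) + dist (\<gamma> t) (\<gamma> 1)) \<le> curve_length \<gamma>"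
proof -
  define p where "p = (\<lambda>i::nat. if i = 0 then 0 else if i = 1 then t else (1::real))"
  have "(2::nat, p) \<in> {(N, t). t 0 = 0 \<and> t N = 1 \<and> (\<forall>i<N. t i \<le> t (Suc i))}"
    using assms by (auto simp: p_def less_2_cases_iff)
  then show ?thesis
    unfolding curve_length_def
    by (rule SUP_upper2) (simp add: p_def numeral_2_eq_2)
qed

lemma length_space_short_path:
  assumes "length_space TYPE('a::metric_space)" and "dist y z < L"
  obtains \<gamma> where "path \<gamma>" "pathstart \<gamma> = (y::'a)" "pathfinish \<gamma> = z"
    "\<And>t. t \<in> {0..1} \<Longrightarrow> dist y (\<gamma> t) + dist (\<gamma> t) z < L"
proof -
  have "(INF \<gamma> \<in> {\<gamma>. path \<gamma> \<and> pathstart \<gamma> = y \<and> pathfinish \<gamma> = z}. curve_length \<gamma>) < ennreal L"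
    using assms zero_le_dist[of y z] unfolding length_space_def
    by (metis ennreal_lessI order_le_less_trans)
  then obtain \<gamma> where \<gamma>: "path \<gamma>" "pathstart \<gamma> = y" "pathfinish \<gamma> = z" "curve_length \<gamma> < ennreal L"
    by (auto simp: INF_less_iff)
  have "dist y (\<gamma> t) + dist (\<gamma> t) z < L" if "t \<in> {0..1}" for t
  proof -
    have "ennreal (dist (\<gamma> 0) (\<gamma> t) + dist (\<gamma> t) (\<gamma> 1)) < ennreal L"
      using curve_length_ge_dist_via[of t \<gamma>] that \<gamma>(4) by auto
    then show ?thesis
      using \<gamma>(2,3) by (subst (asm) ennreal_less_iff) (auto simp: pathstart_def pathfinish_def)
  qed
  with \<gamma> that show ?thesis by blast
qed

lemma length_space_connected_ball:
  assumes "length_space TYPE('a::metric_space)"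
  shows "connected (ball (p::'a) r)"
proof -
  have "path_component (ball p r) p q" if q: "q \<in> ball p r" for q
  proof -
    obtain \<gamma> where \<gamma>: "path \<gamma>" "pathstart \<gamma> = p" "pathfinish \<gamma> = q"
      "\<And>t. t \<in> {0..1} \<Longrightarrow> dist p (\<gamma> t) + dist (\<gamma> t) q < r"
      by (rule length_space_short_path[OF assms, of p q r]) (use q in auto)
    have "path_image \<gamma> \<subseteq> ball p r"
    proof (clarsimp simp: path_image_def)
      fix t :: real assume "0 \<le> t" "t \<le> 1"
      then have "dist p (\<gamma> t) + dist (\<gamma> t) q < r"
        using \<gamma>(4) by simp
      then show "dist p (\<gamma> t) < r"
        using zero_le_dist[of "\<gamma> t" q] by linarith
    qed
    with \<gamma> show ?thesis unfolding path_component_def by blast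
  qed
  then have "path_connected (ball p r)"
    unfolding path_connected_component by (meson path_component_sym path_component_trans)
  then show ?thesis by (rule path_connected_imp_connected)
qed

lemma length_space_open_components:
  assumes "length_space TYPE('a::metric_space)" and "open (S::'a set)" and "c \<in> components S"
  shows "open c"
  unfolding open_contains_ball
proof
  fix y assume "y \<in> c"
  then have c: "c = connected_component_set S y"
    using assms(3) by (metis components_iff connected_component_eq)
  obtain e where "e > 0" "ball y e \<subseteq> S"
    using assms(2,3) \<open>y \<in> c\<close> in_components_subset by (meson openE subsetD)
  then have "ball y e \<subseteq> c"
    unfolding c by (intro connected_component_maximal length_space_connected_ball[OF assms(1)]) auto
  with \<open>e > 0\<close> show "\<exists>e>0. ball y e \<subseteq> c" by blast
qed

lemma components_punctured_meet_ball:
  assumes ls: "length_space TYPE('a::metric_space)"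
    and U: "open U" "connected U" "(x::'a) \<in> U"
    and a: "a \<in> components (U - {x})" and "\<delta> > 0"
  shows "a \<inter> ball x \<delta> \<noteq> {}"
proof
  assume far: "a \<inter> ball x \<delta> = {}"
  have open_comp: "open c" if "c \<in> components (U - {x})" for c
    using length_space_open_components[OF ls _ that] U(1) by (simp add: open_delete)
  obtain e where e: "e > 0" "ball x e \<subseteq> U" using U by (meson openE)
  have "open (U - a)"
    unfolding open_contains_ball
  proof
    fix p assume p: "p \<in> U - a"
    show "\<exists>e>0. ball p e \<subseteq> U - a"
    proof (cases "p = x")
      case True
      then show ?thesis using far e \<open>\<delta> > 0\<close> by (intro exI[of _ "min e \<delta>"]) auto
    next
      case False
      define b where "b = connected_component_set (U - {x}) p"
      have b: "b \<in> components (U - {x})" "p \<in> b"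
        using p False by (auto simp: b_def components_iff)
      then have "b \<inter> a = {}" using p components_nonoverlap[OF b(1) a] by blast
      moreover obtain e' where "e' > 0" "ball p e' \<subseteq> b"
        using open_comp[OF b(1)] b(2) by (meson openE)
      ultimately show ?thesis
        using in_components_subset[OF b(1)] by (intro exI[of _ e']) auto
    qed
  qed
  then have "a \<inter> U = {} \<or> (U - a) \<inter> U = {}"
    using connectedD[OF U(2) open_comp[OF a]] by blast
  moreover have "a \<noteq> {}" "a \<subseteq> U - {x}"
    using a in_components_nonempty in_components_subset by blast+
  ultimately show False using U(3) by blast
qed

(* A nearly shortest curve from y to z is too short to leave U, so it must pass through x. *)

lemma dist_across_components:
  assumes ls: "length_space TYPE('a::metric_space)" and U: "ball (x::'a) (4*\<rho>) \<subseteq> U"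
    and a: "a \<in> components (U - {x})" and b: "b \<in> components (U - {x})" and "a \<noteq> b"
    and "y \<in> a" "z \<in> b" "dist x y < \<rho>" "dist x z < \<rho>"
  shows "dist y z = dist y x + dist x z"
proof (rule antisym)
  show "dist y z \<le> dist y x + dist x z" by (rule dist_triangle)
  show "dist y x + dist x z \<le> dist y z"
  proof (rule field_le_epsilon)
    fix e :: real assume "0 < e"
    define L where "L = dist y z + min e \<rho>"
    have "dist y z < 2*\<rho>"
      using dist_triangle[of y z x] assms(8,9) by (simp add: dist_commute)
    have "0 < \<rho>" using assms(8) zero_le_dist[of x y] by linarith
    then have "dist y z < L" using \<open>0 < e\<close> by (simp add: L_def)
    then obtain \<gamma> where \<gamma>: "path \<gamma>" "pathstart \<gamma> = y" "pathfinish \<gamma> = z"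
      "\<And>t. t \<in> {0..1} \<Longrightarrow> dist y (\<gamma> t) + dist (\<gamma> t) z < L"
      using length_space_short_path[OF ls] by blast
    have "x \<in> path_image \<gamma>"
    proof (rule ccontr)
      assume x: "x \<notin> path_image \<gamma>"
      have "path_image \<gamma> \<subseteq> U"
      proof (clarsimp simp: path_image_def)
        fix t :: real assume "0 \<le> t" "t \<le> 1"
        then have "dist y (\<gamma> t) + dist (\<gamma> t) z < L" using \<gamma>(4) by simp
        moreover have "dist x (\<gamma> t) \<le> dist x y + dist y (\<gamma> t)" by (rule dist_triangle)
        moreover have "L \<le> dist y z + \<rho>" by (simp add: L_def)
        ultimately have "dist x (\<gamma> t) < 4*\<rho>"
          using \<open>dist y z < 2*\<rho>\<close> assms(8) zero_le_dist[of "\<gamma> t" z] by linarith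
        then show "\<gamma> t \<in> U" using U by auto
      qed
      with x have "path_image \<gamma> \<subseteq> U - {x}" by blast
      then have "a = b"
        using joinable_components_eq[of "path_image \<gamma>" "U - {x}" a b]
          connected_path_image[OF \<gamma>(1)] a b assms(6,7)
          pathstart_in_path_image[of \<gamma>] pathfinish_in_path_image[of \<gamma>] \<gamma>(2,3) by blast
      with \<open>a \<noteq> b\<close> show False ..
    qed
    then obtain t where "t \<in> {0..1}" "\<gamma> t = x" by (auto simp: path_image_def)
    then have "dist y x + dist x z < L" using \<gamma>(4) by metis
    then show "dist y x + dist x z \<le> dist y z + e" unfolding L_def by linarith
  qed
qed

lemma Sset_subset_component:
  assumes ls: "length_space TYPE('a::metric_space)" and U: "ball (x::'a) (4*\<rho>) \<subseteq> U"
    and a: "a \<in> components (U - {x})" and y: "y \<in> a" "dist x y < \<rho>"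
    and \<delta>: "0 < \<delta>" "\<delta> < dist x y" "3*\<delta> \<le> \<rho>"
    and Z: "Z \<subseteq> \<Union>(components (U - {x}) - {a}) \<inter> ball x \<delta>"
  shows "Sset y (dist x y - \<delta>) (dist x y) Z \<subseteq> a \<inter> ball x \<delta>"
proof
  fix w assume "w \<in> Sset y (dist x y - \<delta>) (dist x y) Z"
  then obtain z where w: "dist x y - \<delta> < dist y w" "dist y w < dist x y"
    and "z \<in> Z" and wz: "dist y w + dist w z = dist y z"
    using \<delta> unfolding Sset_def annulus_def by auto
  then obtain b where b: "b \<in> components (U - {x})" "b \<noteq> a" "z \<in> b" "dist x z < \<delta>"
    using Z by (force simp: subset_iff)
  have yz: "dist y z = dist y x + dist x z"
    by (rule dist_across_components[OF ls U a b(1)]) (use y \<delta> b in auto)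
  have "dist x w < 3*\<delta>"
    using dist_triangle[of x w z] wz yz w b(4) by (simp add: dist_commute)
  have "w \<in> U - {x}" using U \<open>dist x w < 3*\<delta>\<close> \<delta> w by (auto simp: dist_commute)
  then obtain c where c: "c \<in> components (U - {x})" "w \<in> c"
    by (metis UnionE Union_components)
  have "c = a"
  proof (rule ccontr)
    assume "c \<noteq> a"
    have "dist y w = dist y x + dist x w"
      by (rule dist_across_components[OF ls U a c(1)]) (use \<open>c \<noteq> a\<close> y c \<delta> \<open>dist x w < 3*\<delta>\<close> in auto)
    then show False using w by (simp add: dist_commute)
  qed
  have "dist w z = dist w x + dist x z"
    by (rule dist_across_components[OF ls U c(1) b(1)]) (use \<open>c = a\<close> b c \<delta> \<open>dist x w < 3*\<delta>\<close> in auto)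
  then have "dist x w < \<delta>" using wz yz w by (simp add: dist_commute)
  with c \<open>c = a\<close> show "w \<in> a \<inter> ball x \<delta>" by simp
qed

lemma sk_pos_near_zero:
  obtains R where "R > 0" "\<And>t. 0 < t \<Longrightarrow> t < R \<Longrightarrow> 0 < sk k t"
proof
  define R where "R = (if k > 0 then pi / sqrt k else 1)"
  show "R > 0" by (simp add: R_def)
  fix t assume "0 < t" "t < R"
  then show "0 < sk k t"
    by (auto simp: sk_def R_def field_simps intro!: divide_pos_pos sin_gt_zero split: if_splits)
qed

lemma continuous_on_sk: "continuous_on A (sk k)"
proof -
  consider "k > 0" | "k = 0" | "k < 0" by linarith
  then show ?thesis
  proof cases
    case 1
    then have "sk k = (\<lambda>t. sin (sqrt k * t) / sqrt k)" by (auto simp: sk_def fun_eq_iff)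
    then show ?thesis using 1 by (simp add: continuous_intros)
  next
    case 2
    then have "sk k = (\<lambda>t. t)" by (auto simp: sk_def fun_eq_iff)
    then show ?thesis by (simp add: continuous_intros)
  next
    case 3
    then have "sk k = (\<lambda>t. sinh (sqrt (-k) * t) / sqrt (-k))" by (auto simp: sk_def fun_eq_iff)
    then show ?thesis using 3 by (simp add: sinh_def continuous_intros)
  qed
qed

lemma continuous_on_rpow_sk:
  assumes "\<And>t. t \<in> A \<Longrightarrow> sk k t > 0"
  shows "continuous_on A (\<lambda>t. rpow (sk k t) n)"
proof (cases "n = 1")
  case True
  then show ?thesis by (simp add: rpow_def)
next
  case False
  have "continuous_on A (\<lambda>t. sk k t powr (n - 1))"
    using assms by (intro continuous_on_powr continuous_on_sk continuous_on_const) force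
  then show ?thesis
    by (rule continuous_on_cong[THEN iffD1, rotated 2]) (use assms False in \<open>auto simp: rpow_def\<close>)
qed

lemma Vkn_nonneg:
  assumes "n > 0"
  shows "0 \<le> Vkn k n r1 r2"
proof -
  have "0 \<le> integral {r1..r2} (\<lambda>t. rpow (sk k t) n)"
    by (cases "(\<lambda>t. rpow (sk k t) n) integrable_on {r1..r2}")
      (auto simp: rpow_def not_integrable_integral intro!: integral_nonneg)
  then show ?thesis
    using assms by (simp add: Vkn_def alpha_def)
qed

lemma integral_right_le_left_eventually:
  fixes f :: "real \<Rightarrow> real"
  assumes f: "continuous_on {r - e..r + e} f" and "0 < e" "0 < f r" "0 < \<eta>"
  shows "\<forall>\<^sub>F \<delta> in at_right 0.
           0 < integral {r - \<delta>..r} f \<and> integral {r..r + \<delta>} f \<le> (1 + \<eta>) * integral {r - \<delta>..r} f"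
proof -
  \<comment> \<open>Both integrals equal \<delta> f(r) up to a factor in [1 - \<theta>, 1 + \<theta>], and 1 + \<theta> = (1 + \<eta>) (1 - \<theta>).\<close>
  define \<theta> where "\<theta> = \<eta> / (2 + \<eta>)"
  have \<theta>: "0 < \<theta>" "\<theta> < 1" "1 + \<theta> = (1 + \<eta>) * (1 - \<theta>)"
    using \<open>0 < \<eta>\<close> by (auto simp: \<theta>_def field_simps)
  have "isCont f r"
    using continuous_on_interior[OF f] \<open>0 < e\<close> by simp
  then obtain d where "d > 0" and d: "\<And>t. dist t r < d \<Longrightarrow> dist (f t) (f r) < \<theta> * f r"
    using \<theta> \<open>0 < f r\<close> unfolding continuous_at_eps_delta by (meson mult_pos_pos)
  show ?thesis
    unfolding eventually_at_right_field
  proof (intro exI[of _ "min d e"] conjI allI impI)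
    show "0 < min d e" using \<open>d > 0\<close> \<open>e > 0\<close> by simp
    fix \<delta> :: real assume "0 < \<delta>" "\<delta> < min d e"
    have near: "(1 - \<theta>) * f r \<le> f t \<and> f t \<le> (1 + \<theta>) * f r" if "t \<in> {r - \<delta>..r + \<delta>}" for t
      using d[of t] that \<open>\<delta> < min d e\<close> by (auto simp: dist_real_def abs_less_iff algebra_simps)
    have int: "f integrable_on {a..b}" if "{a..b} \<subseteq> {r - \<delta>..r + \<delta>}" for a b
      using that \<open>\<delta> < min d e\<close>
      by (intro integrable_continuous_interval continuous_on_subset[OF f]) auto
    have "integral {r..r + \<delta>} f \<le> integral {r..r + \<delta>} (\<lambda>_. (1 + \<theta>) * f r)"
      using near by (intro integral_le int) auto
    also have "\<dots> = (1 + \<eta>) * (\<delta> * ((1 - \<theta>) * f r))"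
      using \<open>0 < \<delta>\<close> \<theta>(3) by simp
    finally have right: "integral {r..r + \<delta>} f \<le> (1 + \<eta>) * (\<delta> * ((1 - \<theta>) * f r))" .
    have "\<delta> * ((1 - \<theta>) * f r) = integral {r - \<delta>..r} (\<lambda>_. (1 - \<theta>) * f r)"
      using \<open>0 < \<delta>\<close> by simp
    also have "\<dots> \<le> integral {r - \<delta>..r} f"
      using near by (intro integral_le int) auto
    finally have left: "\<delta> * ((1 - \<theta>) * f r) \<le> integral {r - \<delta>..r} f" .
    have "0 < \<delta> * ((1 - \<theta>) * f r)"
      using \<open>0 < \<delta>\<close> \<theta> \<open>0 < f r\<close> by simp
    with left show "0 < integral {r - \<delta>..r} f" by linarith
    from right left \<open>0 < \<eta>\<close> show "integral {r..r + \<delta>} f \<le> (1 + \<eta>) * integral {r - \<delta>..r} f"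
      by (smt (verit) mult_left_mono)
  qed
qed

lemma Vkn_right_le_left_eventually:
  assumes "n > 0" "0 < r" "0 < \<eta>" and pos: "\<And>t. 0 < t \<Longrightarrow> t < 2*r \<Longrightarrow> 0 < sk k t"
  shows "\<forall>\<^sub>F \<delta> in at_right 0. 0 < Vkn k n (r - \<delta>) r \<and> Vkn k n r (r + \<delta>) \<le> (1 + \<eta>) * Vkn k n (r - \<delta>) r"
proof -
  have "continuous_on {r - r/2..r + r/2} (\<lambda>t. rpow (sk k t) n)"
    using \<open>0 < r\<close> by (intro continuous_on_rpow_sk pos) auto
  moreover have "0 < rpow (sk k r) n"
    using pos[of r] \<open>0 < r\<close> by (simp add: rpow_def)
  ultimately have ev: "\<forall>\<^sub>F \<delta> in at_right 0. 0 < integral {r - \<delta>..r} (\<lambda>t. rpow (sk k t) n) \<and>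
      integral {r..r + \<delta>} (\<lambda>t. rpow (sk k t) n) \<le> (1 + \<eta>) * integral {r - \<delta>..r} (\<lambda>t. rpow (sk k t) n)"
    using \<open>0 < r\<close> \<open>0 < \<eta>\<close> by (intro integral_right_le_left_eventually[where e="r/2"]) auto
  have "alpha n > 0"
    using \<open>n > 0\<close> by (simp add: alpha_def)
  then show ?thesis
    unfolding Vkn_def by (intro eventually_mono[OF ev]) (simp add: mult.left_commute)
qed

lemma metric_measure_space_emeasure_less_top:
  assumes "metric_measure_space \<mu>" and "S \<subseteq> ball p r"
  shows "emeasure \<mu> S < \<infinity>"
proof (cases "r > 0")
  case True
  have "emeasure \<mu> S \<le> emeasure \<mu> (ball p r)"
    using assms by (intro emeasure_mono) (auto simp: metric_measure_space_def)
  also have "\<dots> < \<infinity>"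
    using assms True by (simp add: metric_measure_space_def)
  finally show ?thesis .
next
  case False
  with assms(2) have "S = {}" by (metis ball_eq_empty not_less subset_empty)
  then show ?thesis by simp
qed

lemma metric_measure_space_emeasure_open_pos:
  assumes "metric_measure_space \<mu>" and "open S" "S \<noteq> {}"
  shows "0 < emeasure \<mu> S"
proof -
  obtain p e where "e > 0" "ball p e \<subseteq> S"
    using assms(2,3) by (meson ex_in_conv openE)
  then have "emeasure \<mu> (ball p e) \<le> emeasure \<mu> S"
    using assms by (intro emeasure_mono) (auto simp: metric_measure_space_def)
  moreover have "0 < emeasure \<mu> (ball p e)"
    using assms(1) \<open>e > 0\<close> by (simp add: metric_measure_space_def)
  ultimately show ?thesis by simp
qed

lemma measure_other_components_le:
  fixes \<mu> :: "'a::metric_space measure"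
  assumes mms: "metric_measure_space \<mu>" and "n > 0" "C \<ge> 0" and bg: "BG k n C \<mu>"
    and U: "open U" "ball x (4*\<rho>) \<subseteq> U" and a: "a \<in> components (U - {x})"
    and y: "y \<in> a" "dist x y < \<rho>" and \<delta>: "0 < \<delta>" "\<delta> < dist x y" "3*\<delta> \<le> \<rho>"
    and Z: "Z \<in> sets \<mu>" "Z \<subseteq> \<Union>(components (U - {x}) - {a}) \<inter> ball x \<delta>"
  shows "measure \<mu> Z * Vkn k n (dist x y - \<delta>) (dist x y)
           \<le> C * Vkn k n (dist x y) (dist x y + \<delta>) * measure \<mu> (a \<inter> ball x \<delta>)"
proof -
  have ls: "length_space TYPE('a)" and sets: "sets \<mu> = sets borel"
    using mms by (auto simp: metric_measure_space_def)
  define r where "r = dist x y"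
  have "Z \<subseteq> annulus y r (r + \<delta>)"
  proof
    fix z assume "z \<in> Z"
    then obtain b where b: "b \<in> components (U - {x})" "b \<noteq> a" "z \<in> b" "dist x z < \<delta>"
      using Z by (force simp: subset_iff)
    have "dist y z = dist y x + dist x z"
      by (rule dist_across_components[OF ls U(2) a b(1)]) (use b y \<delta> in auto)
    then have "dist y z = r + dist x z"
      by (simp add: r_def dist_commute)
    moreover have "z \<noteq> x" "r \<noteq> 0"
      using b in_components_subset \<delta> r_def by auto
    ultimately show "z \<in> annulus y r (r + \<delta>)"
      using b(4) by (simp add: annulus_def)
  qed
  then have BG_Z: "emeasure \<mu> Z * ennreal (Vkn k n (r - \<delta>) r)
      \<le> ennreal C * ennreal (Vkn k n r (r + \<delta>)) * outer_meas \<mu> (Sset y (r - \<delta>) r Z)"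
    using \<delta> Z(1)
    by (intro bg[unfolded BG_def, rule_format, of r "r + \<delta>" "r - \<delta>" r Z y]) (auto simp: r_def)
  have "open (a \<inter> ball x \<delta>)"
    using length_space_open_components[OF ls _ a] U(1) by (simp add: open_delete open_Int)
  then have "outer_meas \<mu> (Sset y (r - \<delta>) r Z) \<le> emeasure \<mu> (a \<inter> ball x \<delta>)"
    unfolding outer_meas_def r_def
    using Sset_subset_component[OF ls U(2) a y \<delta> Z(2)] by (intro INF_lower) (auto simp: sets)
  with BG_Z have "emeasure \<mu> Z * ennreal (Vkn k n (r - \<delta>) r)
      \<le> ennreal C * ennreal (Vkn k n r (r + \<delta>)) * emeasure \<mu> (a \<inter> ball x \<delta>)"
    by (meson order_trans mult_left_mono zero_le)
  moreover have "emeasure \<mu> Z \<noteq> \<infinity>" "emeasure \<mu> (a \<inter> ball x \<delta>) \<noteq> \<infinity>"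
    using metric_measure_space_emeasure_less_top[OF mms, of _ x \<delta>] Z(2) by (simp_all add: less_top)
  ultimately have "ennreal (measure \<mu> Z * Vkn k n (r - \<delta>) r)
      \<le> ennreal (C * Vkn k n r (r + \<delta>) * measure \<mu> (a \<inter> ball x \<delta>))"
    using Vkn_nonneg[OF \<open>n > 0\<close>, of k] \<open>C \<ge> 0\<close>
    by (simp add: emeasure_eq_ennreal_measure ennreal_mult'[symmetric] ennreal_mult[symmetric])
  then show ?thesis
    using Vkn_nonneg[OF \<open>n > 0\<close>, of k] \<open>C \<ge> 0\<close> by (simp add: ennreal_le_iff r_def)
qed

lemma card_le_of_measure_rest_le:
  assumes J: "finite J" "J \<noteq> {}" and W: "disjoint_family_on W J" "\<And>i. i \<in> J \<Longrightarrow> W i \<in> sets \<mu>"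
    "\<And>i. i \<in> J \<Longrightarrow> emeasure \<mu> (W i) \<noteq> \<infinity>" "\<And>i. i \<in> J \<Longrightarrow> 0 < measure \<mu> (W i)"
    and rest: "\<And>i. i \<in> J \<Longrightarrow> measure \<mu> (\<Union>j\<in>J - {i}. W j) \<le> c * measure \<mu> (W i)"
  shows "real (card J) - 1 \<le> c"
proof -
  define M where "M = (\<Sum>j\<in>J. measure \<mu> (W j))"
  have "M - measure \<mu> (W i) \<le> c * measure \<mu> (W i)" if "i \<in> J" for i
  proof -
    have "measure \<mu> (\<Union>j\<in>J - {i}. W j) = (\<Sum>j\<in>J - {i}. measure \<mu> (W j))"
      using J W by (intro measure_finite_Union) (auto intro: disjoint_family_on_mono)
    also have "\<dots> = M - measure \<mu> (W i)"
      using J that by (simp add: M_def sum_diff1)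
    finally show ?thesis using rest[OF that] by simp
  qed
  then have "(\<Sum>i\<in>J. M - measure \<mu> (W i)) \<le> (\<Sum>i\<in>J. c * measure \<mu> (W i))"
    by (rule sum_mono)
  then have "(real (card J) - 1) * M \<le> c * M"
    by (simp add: sum_subtractf sum_distrib_left M_def algebra_simps)
  moreover have "0 < M"
    using J W by (simp add: M_def sum_pos)
  ultimately show ?thesis by simp
qed

lemma card_components_punctured_le_ratio:
  fixes \<mu> :: "'a::metric_space measure" and x :: 'a
  assumes mms: "metric_measure_space \<mu>" and "n > 0" "C \<ge> 0" and bg: "BG k n C \<mu>"
    and U: "open U" "connected U" "x \<in> U" "ball x (4*\<rho>) \<subseteq> U"
    and J: "J \<subseteq> components (U - {x})" "finite J" "J \<noteq> {}"
    and y: "\<And>i. i \<in> J \<Longrightarrow> y i \<in> i \<and> dist x (y i) < \<rho>"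
    and \<delta>: "0 < \<delta>" "3*\<delta> \<le> \<rho>" "\<And>i. i \<in> J \<Longrightarrow> \<delta> < dist x (y i)"
    and V: "\<And>i. i \<in> J \<Longrightarrow> 0 < Vkn k n (dist x (y i) - \<delta>) (dist x (y i)) \<and>
      Vkn k n (dist x (y i)) (dist x (y i) + \<delta>) \<le> c * Vkn k n (dist x (y i) - \<delta>) (dist x (y i))"
  shows "real (card J) - 1 \<le> C * c"
proof -
  have ls: "length_space TYPE('a)" and sets: "sets \<mu> = sets borel"
    using mms by (auto simp: metric_measure_space_def)
  have open_comp: "open i" if "i \<in> J" for i
    using length_space_open_components[OF ls _, of "U - {x}" i] J(1) that U(1) by (auto simp: open_delete)
  define W where "W i = i \<inter> ball x \<delta>" for i
  show ?thesis
  proof (rule card_le_of_measure_rest_le[OF J(2,3), of W \<mu>])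
    show "disjoint_family_on W J"
      using J(1) components_nonoverlap by (fastforce simp: disjoint_family_on_def W_def)
    show "W i \<in> sets \<mu>" if "i \<in> J" for i
      using open_comp[OF that] by (simp add: W_def sets open_Int)
    show fin: "emeasure \<mu> (W i) \<noteq> \<infinity>" for i
      using metric_measure_space_emeasure_less_top[OF mms, of "W i" x \<delta>] by (simp add: W_def)
    show "0 < measure \<mu> (W i)" if "i \<in> J" for i
      using metric_measure_space_emeasure_open_pos[OF mms, of "W i"] open_comp[OF that] fin[of i]
        components_punctured_meet_ball[OF ls U(1-3), of i \<delta>] J(1) that \<delta>(1)
      by (auto simp: W_def open_Int emeasure_eq_ennreal_measure)
    fix i assume i: "i \<in> J"
    define r where "r = dist x (y i)"
    define Z where "Z = (\<Union>j\<in>J - {i}. W j)"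
    have "open Z"
      unfolding Z_def W_def using open_comp by (intro open_UN ballI open_Int) auto
    then have "Z \<in> sets \<mu>" by (simp add: sets)
    moreover have "Z \<subseteq> \<Union>(components (U - {x}) - {i}) \<inter> ball x \<delta>"
      using J(1) by (auto simp: Z_def W_def)
    ultimately have "measure \<mu> Z * Vkn k n (r - \<delta>) r \<le> C * Vkn k n r (r + \<delta>) * measure \<mu> (W i)"
      unfolding r_def W_def
      by (intro measure_other_components_le[OF mms \<open>n > 0\<close> \<open>C \<ge> 0\<close> bg U(1,4)])
        (use i J(1) y \<delta> in auto)
    also have "\<dots> \<le> C * (c * Vkn k n (r - \<delta>) r) * measure \<mu> (W i)"
      using V[OF i] \<open>C \<ge> 0\<close> by (intro mult_right_mono mult_left_mono) (auto simp: r_def)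
    finally have "measure \<mu> Z * Vkn k n (r - \<delta>) r \<le> (C * c * measure \<mu> (W i)) * Vkn k n (r - \<delta>) r"
      by (simp add: algebra_simps)
    then show "measure \<mu> (\<Union>j\<in>J - {i}. W j) \<le> C * c * measure \<mu> (W i)"
      using V[OF i] by (simp add: Z_def r_def)
  qed
qed

lemma card_components_punctured_le_mult:
  fixes \<mu> :: "'a::metric_space measure" and x :: 'a
  assumes mms: "metric_measure_space \<mu>" and "n > 0" "C \<ge> 0" and bg: "BG k n C \<mu>"
    and U: "open U" "connected U" "x \<in> U"
    and J: "J \<subseteq> components (U - {x})" "finite J" "J \<noteq> {}" and "\<eta> > 0"
  shows "real (card J) - 1 \<le> C * (1 + \<eta>)"
proof -
  have ls: "length_space TYPE('a)"
    using mms by (simp add: metric_measure_space_def)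
  obtain e where "e > 0" "ball x e \<subseteq> U" using U by (meson openE)
  obtain R where "R > 0" and R: "\<And>t. 0 < t \<Longrightarrow> t < R \<Longrightarrow> 0 < sk k t"
    using sk_pos_near_zero by blast
  define \<rho> where "\<rho> = min (e/4) (R/2)"
  have "\<rho> > 0" and U4: "ball x (4*\<rho>) \<subseteq> U"
    using \<open>e > 0\<close> \<open>R > 0\<close> \<open>ball x e \<subseteq> U\<close> by (auto simp: \<rho>_def)
  have "\<forall>i\<in>J. \<exists>y. y \<in> i \<and> dist x y < \<rho>"
    using components_punctured_meet_ball[OF ls U] J(1) \<open>\<rho> > 0\<close> by fastforce
  then obtain y where y: "\<And>i. i \<in> J \<Longrightarrow> y i \<in> i \<and> dist x (y i) < \<rho>" by metis
  define r where "r i = dist x (y i)" for i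
  have r: "0 < r i" "r i < \<rho>" if "i \<in> J" for i
    using y[OF that] J(1) that in_components_subset by (fastforce simp: r_def)+
  have "\<forall>\<^sub>F \<delta> in at_right 0. \<forall>i\<in>J. 0 < Vkn k n (r i - \<delta>) (r i) \<and>
      Vkn k n (r i) (r i + \<delta>) \<le> (1 + \<eta>) * Vkn k n (r i - \<delta>) (r i)"
    using r \<open>n > 0\<close> \<open>\<eta> > 0\<close> R J(2) unfolding \<rho>_def
    by (intro eventually_ball_finite ballI Vkn_right_le_left_eventually) force+
  moreover have "\<forall>\<^sub>F \<delta> in at_right 0. 0 < \<delta> \<and> \<delta> < \<rho>/3 \<and> (\<forall>i\<in>J. \<delta> < r i)"
    using J(2) r \<open>\<rho> > 0\<close>
    by (intro eventually_conj eventually_at_right_less eventually_ball_finite ballI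
        order_tendstoD(2)[OF tendsto_ident_at]) auto
  ultimately obtain \<delta> where V: "\<forall>i\<in>J. 0 < Vkn k n (r i - \<delta>) (r i) \<and>
      Vkn k n (r i) (r i + \<delta>) \<le> (1 + \<eta>) * Vkn k n (r i - \<delta>) (r i)"
    and \<delta>: "0 < \<delta>" "\<delta> < \<rho>/3" "\<forall>i\<in>J. \<delta> < r i"
    using eventually_happens'[OF trivial_limit_at_right_real eventually_conj] by blast
  show ?thesis
    using V \<delta> y unfolding r_def
    by (intro card_components_punctured_le_ratio[OF mms \<open>n > 0\<close> \<open>C \<ge> 0\<close> bg U U4 J]) auto
qed

lemma card_components_punctured_le:
  fixes \<mu> :: "'a::metric_space measure" and x :: 'a
  assumes "metric_measure_space \<mu>" "n > 0" "C \<ge> 0" "BG k n C \<mu>"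
    and "open U" "connected U" "x \<in> U"
    and "J \<subseteq> components (U - {x})" "finite J" "J \<noteq> {}"
  shows "real (card J) - 1 \<le> C"
proof (rule field_le_epsilon)
  fix e :: real assume "0 < e"
  then have "real (card J) - 1 \<le> C * (1 + e / (C + 1))"
    using assms by (intro card_components_punctured_le_mult) auto
  also have "\<dots> \<le> C + e"
    using \<open>0 < e\<close> \<open>C \<ge> 0\<close> by (simp add: field_simps)
  finally show "real (card J) - 1 \<le> C + e" .
qed

lemma ncomp_punctured_le:
  fixes \<mu> :: "'a::metric_space measure" and x :: 'a
  assumes mms: "metric_measure_space \<mu>" and "n > 0" "C \<ge> 0" and bg: "BG k n C \<mu>"
    and U: "open U" "connected U" "x \<in> U"
  shows "ncomp (U - {x}) \<le> ennreal (C + 1)"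
proof -
  note card_le = card_components_punctured_le[OF mms \<open>n > 0\<close> \<open>C \<ge> 0\<close> bg U]
  have fin: "finite (components (U - {x}))"
  proof (rule ccontr)
    assume "infinite (components (U - {x}))"
    then obtain J where J: "J \<subseteq> components (U - {x})" "finite J" "card J = nat \<lceil>C\<rceil> + 2"
      by (meson infinite_arbitrarily_large)
    then have "real (card J) - 1 \<le> C" by (intro card_le) auto
    with J(3) show False by linarith
  qed
  have "real (card (components (U - {x}))) \<le> C + 1"
  proof (cases "components (U - {x}) = {}")
    case True
    then show ?thesis using \<open>C \<ge> 0\<close> unfolding True by simp
  next
    case False
    then show ?thesis using card_le[OF subset_refl fin] by simp
  qed
  then show ?thesis
    using fin by (simp add: ncomp_def ennreal_of_nat_eq_real_of_nat ennreal_leI)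
qed

theorem theorem1p1:
  fixes \<mu> :: "'a::metric_space measure" and k n C :: real and x :: 'a
  assumes "metric_measure_space \<mu>"
    and "n \<ge> 1" and "C \<ge> 1"
    and "BG k n C \<mu>"
    and "local_cut_point x"
  shows "deg x \<le> ennreal (C\<^sup>2 + 1)"
  unfolding deg_def
proof (rule SUP_least, clarify)
  fix U assume "open U" "x \<in> U" "connected U"
  then have "ncomp (U - {x}) \<le> ennreal (C + 1)"
    using assms(1-4) by (intro ncomp_punctured_le) auto
  also have "\<dots> \<le> ennreal (C\<^sup>2 + 1)"
    using \<open>C \<ge> 1\<close> by (intro ennreal_leI) (simp add: power2_eq_square)
  finally show "ncomp (U - {x}) \<le> ennreal (C\<^sup>2 + 1)" .
qed

end
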